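(* Consider $n$ processes running the Median-based Byzantine Agreement algorithm (described in the context) with any parameter $\alpha$ satisfying $0 \le \alpha < \lceil n/6 \rceil - 1$, in a system with fewer than $\lfloor n/3 \rfloor$ Byzantine processes. Then the algorithm solves Multi-valued Byzantine Agreement with interval validity: (consistency) all non-faulty processes output the same value $d$, and (interval validity) $d \in \{\min T,\dots,\max T\}$, where $T$ is the multiset of inputs of the non-faulty processes.
   Context: System model: $n$ processes $p_1,\dots,p_n$ communicate over a complete network in fully synchronous rounds (every message sent in a round is delivered before the next round); the receiver of a message knows its sender. A Byzantine (faulty) process may deviate arbitrarily from the protocol, e.g. send different messages to different processes or omit messages; the other processes are non-faulty. Each process $p_i$ has an input value $v_i$ from a totally ordered domain $V$ (integers); $\bot \notin V$ is a special default value. WeakMVBA: a Byzantine agreement protocol (tolerating the given number of Byzantine processes) in which each process has an input and all non-faulty processes terminate with: (consistency) the same decision value; (weak validity) if all non-faulty processes have the same input $v$, the decision is $v$; otherwise the decision is some value of $V\cup\{\bot\}$. Median-based Byzantine Agreement algorithm with parameter $\alpha$, run by a process with input $v$: (1) send $v$ to all processes (including itself); initialize an array $A[1..n]$ to $\bot$ and set $A[i]$ to the value received from $p_i$. (2) For each $i=1,\dots,n$, in parallel, run an instance of WeakMVBA in which this process uses input $A[i]$, and replace $A[i]$ by the decision of that instance. (3) Output select\_value$(A)$, defined as: delete all $\bot$ entries of $A$ to obtain a list $A_{\not\bot}$ of length $k$; let $C[u]$ be the number of occurrences of $u$ in $A_{\not\bot}$ and let $m$ be a value maximizing $C[m]$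 (ties broken by a fixed deterministic rule); if $C[m] \ge \lfloor k/3\rfloor + 1 + \alpha$, output $m$; otherwise sort $A_{\not\bot}$ in nondecreasing order and output its median element (the entry at position $\lfloor k/2 \rfloor$; for even $k$ the lower of the two middle values). *)

theory Defs
  imports Complex_Main
begin

text \<open>Values V = int; the default value bot is None. Processes are 0..n-1.\<close>

definition non_bot :: "int option list \<Rightarrow> int list" where
  "non_bot A = map the (filter (\<lambda>x. x \<noteq> None) A)"

definition tie_rule :: "(int list \<Rightarrow> int) \<Rightarrow> bool" where
  "tie_rule pick \<longleftrightarrow> (\<forall>xs. xs \<noteq> [] \<longrightarrow>
      pick xs \<in> set xs \<and> (\<forall>u. count_list xs u \<le> count_list xs (pick xs)))"

text \<open>select_value with parameter alpha; median = lower middle element of the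
  sorted list (0-based index (k-1) div 2).\<close>
definition select_value :: "(int list \<Rightarrow> int) \<Rightarrow> nat \<Rightarrow> int option list \<Rightarrow> int" where
  "select_value pick \<alpha> A =
     (let L = non_bot A; k = length L; m = pick L in
      if count_list L m \<ge> k div 3 + 1 + \<alpha> then m
      else sort L ! ((k - 1) div 2))"

end

theory Submission imports Defs "HOL-Library.Multiset" begin

text \<open>All non-faulty processes
  hold the same array, since every WeakMVBA instance is consistent. Entries of non-faulty
  processes are their inputs by weak validity, so an entry outside \<open>[min T, max T]\<close> belongs
  to one of the \<open>f < n/3\<close> faulty processes. There are at least \<open>n - f > 2f\<close> correct entries,
  hence fewer than a third of the non-\<open>\<bottom>\<close> entries lie outside the interval. A value
  occurring more than a third of the time is therefore inside it, and so is the median,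
  which has more than a third of the entries on either side.\<close>

lemma count_list_le_length_filter:
  assumes "P x"
  shows "count_list xs x \<le> length (filter P xs)"
  using assms by (induction xs) auto

lemma length_filter_mono:
  assumes "\<And>x. P x \<Longrightarrow> Q x"
  shows "length (filter P xs) \<le> length (filter Q xs)"
  using assms by (induction xs) auto

lemma length_filter_sort: "length (filter P (sort xs)) = length (filter P xs)"
  by (metis mset_filter mset_sort size_mset)

lemma le_sort_nth:
  fixes xs :: "'a::linorder list"
  assumes "p < length xs" and "length (filter (\<lambda>x. x < lo) xs) \<le> p"
  shows "lo \<le> sort xs ! p"
proof (rule ccontr)
  let ?ys = "take (Suc p) (sort xs)"
  assume "\<not> lo \<le> sort xs ! p"
  then have "sort xs ! i < lo" if "i \<le> p" for i
    using that assms(1) sorted_nth_mono[OF sorted_sort[of xs], of i p] by (simp add: not_le)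
  then have "\<forall>x\<in>set ?ys. x < lo"
    by (auto simp: in_set_conv_nth)
  then have "Suc p = length (filter (\<lambda>x. x < lo) ?ys)"
    using assms(1) by (simp add: filter_id_conv[THEN iffD2])
  also have "\<dots> \<le> length (filter (\<lambda>x. x < lo) (sort xs))"
    by (metis append_take_drop_id filter_append length_append le_add1)
  finally show False
    using assms(2) by (simp add: length_filter_sort)
qed

lemma sort_nth_le:
  fixes xs :: "'a::linorder list"
  assumes "p < length xs" and "length (filter (\<lambda>x. hi < x) xs) < length xs - p"
  shows "sort xs ! p \<le> hi"
proof (rule ccontr)
  let ?ys = "drop p (sort xs)"
  assume "\<not> sort xs ! p \<le> hi"
  then have "hi < sort xs ! i" if "p \<le> i" "i < length xs" for i
    using that sorted_nth_mono[OF sorted_sort[of xs], of p i] by (simp add: not_le)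
  then have "\<forall>x\<in>set ?ys. hi < x"
    by (auto simp: in_set_conv_nth)
  then have "length xs - p = length (filter (\<lambda>x. hi < x) ?ys)"
    by (simp add: filter_id_conv[THEN iffD2])
  also have "\<dots> \<le> length (filter (\<lambda>x. hi < x) (sort xs))"
    by (metis append_take_drop_id filter_append length_append le_add2)
  finally show False
    using assms(2) by (simp add: length_filter_sort)
qed

lemma select_value_between:
  assumes "3 * length (filter (\<lambda>x. x < lo \<or> hi < x) (non_bot A)) < length (non_bot A)"
  shows "lo \<le> select_value pick \<alpha> A \<and> select_value pick \<alpha> A \<le> hi"
proof -
  define L where "L = non_bot A"
  define k where "k = length L"
  define b where "b = length (filter (\<lambda>x. x < lo \<or> hi < x) L)"
  have b_k: "3 * b < k"
    using assms by (simp add: L_def k_def b_def)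
  show ?thesis
  proof (cases "k div 3 + 1 + \<alpha> \<le> count_list L (pick L)")
    case True
    then have "select_value pick \<alpha> A = pick L"
      by (simp add: select_value_def Let_def L_def k_def)
    moreover have "\<not> (pick L < lo \<or> hi < pick L)"
    proof
      assume "pick L < lo \<or> hi < pick L"
      then have "count_list L (pick L) \<le> b"
        unfolding b_def by (rule count_list_le_length_filter)
      with True b_k show False
        by linarith
    qed
    ultimately show ?thesis
      by auto
  next
    case False
    then have sv: "select_value pick \<alpha> A = sort L ! ((k - 1) div 2)"
      by (simp add: select_value_def Let_def L_def k_def)
    have "length (filter (\<lambda>x. x < lo) L) \<le> b" "length (filter (\<lambda>x. hi < x) L) \<le> b"
      unfolding b_def by (auto intro: length_filter_mono)
    with b_k have "lo \<le> sort L ! ((k - 1) div 2)" "sort L ! ((k - 1) div 2) \<le> hi"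
      by (auto intro!: le_sort_nth sort_nth_le simp: k_def)
    with sv show ?thesis
      by simp
  qed
qed

lemma length_filter_non_bot_map_upt:
  "length (filter P (non_bot (map d [0..<n]))) =
     card {i. i < n \<and> (\<exists>x. d i = Some x \<and> P x)}"
  unfolding non_bot_def
  by (auto simp: filter_map o_def filter_filter length_filter_conv_card intro!: arg_cong[where f = card])

lemma length_filter_non_bot_less_third:
  assumes G: "G \<subseteq> {..<n}" and two_thirds: "2 * (n - card G) < card G"
    and good: "\<And>i. i \<in> G \<Longrightarrow> \<exists>x. d i = Some x \<and> \<not> P x"
  shows "3 * length (filter P (non_bot (map d [0..<n]))) < length (non_bot (map d [0..<n]))"
proof -
  define B where "B = {i. i < n \<and> (\<exists>x. d i = Some x \<and> P x)}"
  define N where "N = {i. i < n \<and> (\<exists>x. d i = Some x)}"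
  have fin: "finite G" "finite B"
    using G finite_subset by (auto simp: B_def)
  have "B \<subseteq> {..<n} - G"
    using good by (fastforce simp: B_def)
  then have "card B \<le> n - card G"
    using card_mono[of "{..<n} - G" B] G by (simp add: card_Diff_subset fin)
  moreover have "card G + card B \<le> card N"
  proof -
    have "G \<inter> B = {}"
      using good by (force simp: B_def)
    then have "card G + card B = card (G \<union> B)"
      by (simp add: card_Un_disjoint fin)
    also have "\<dots> \<le> card N"
      using G good by (intro card_mono) (auto simp: N_def B_def)
    finally show ?thesis .
  qed
  moreover have "length (filter P (non_bot (map d [0..<n]))) = card B"
    "length (non_bot (map d [0..<n])) = card N"
    using length_filter_non_bot_map_upt[of P d n] length_filter_non_bot_map_upt[of "\<lambda>_. True" d n]
    by (simp_all add: B_def N_def)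
  ultimately show ?thesis
    using two_thirds by linarith
qed

theorem theorem1:
  fixes n \<alpha> :: nat
    and F :: "nat set"
    and v :: "nat \<Rightarrow> int"
    and recv :: "nat \<Rightarrow> nat \<Rightarrow> int option"
    and dec :: "nat \<Rightarrow> nat \<Rightarrow> int option"
    and pick :: "int list \<Rightarrow> int"
  assumes tie: "tie_rule pick"
    and F_sub: "F \<subseteq> {..<n}"
    and F_card: "card F < n div 3"
    and alpha_bound: "int \<alpha> < \<lceil>real n / 6\<rceil> - 1"
    and recv_ok: "\<forall>j\<in>{..<n} - F. \<forall>i\<in>{..<n} - F. recv j i = Some (v i)"
    and mvba_consistency: "\<forall>i<n. \<forall>j\<in>{..<n} - F. \<forall>k\<in>{..<n} - F. dec j i = dec k i"
    and mvba_weak_validity: "\<forall>i<n. \<forall>x. (\<forall>j\<in>{..<n} - F. recv j i = x)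
                                      \<longrightarrow> (\<forall>j\<in>{..<n} - F. dec j i = x)"
  shows "\<exists>d. (\<forall>j\<in>{..<n} - F. select_value pick \<alpha> (map (dec j) [0..<n]) = d)
             \<and> Min (v ` ({..<n} - F)) \<le> d \<and> d \<le> Max (v ` ({..<n} - F))"
proof -
  define C where "C = {..<n} - F"
  have "card C = n - card F"
    using F_sub by (simp add: C_def card_Diff_subset finite_subset)
  with F_card have two_thirds: "2 * (n - card C) < card C"
    by linarith
  then obtain j0 where j0: "j0 \<in> C"
    by fastforce
  define A where "A = map (dec j0) [0..<n]"
  have same_array: "map (dec j) [0..<n] = A" if j: "j \<in> C" for j
  proof -
    have "dec j i = dec j0 i" if "i < n" for i
      using mvba_consistency that j j0 unfolding C_def by blast
    then show ?thesis
      unfolding A_def by simp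
  qed
  have correct_entry: "dec j0 i = Some (v i)" if "i \<in> C" for i
  proof -
    have "\<forall>j\<in>C. recv j i = Some (v i)"
      using recv_ok that by (simp add: C_def)
    then show ?thesis
      using mvba_weak_validity j0 that by (simp add: C_def)
  qed
  have "\<exists>x. dec j0 i = Some x \<and> \<not> (x < Min (v ` C) \<or> Max (v ` C) < x)" if "i \<in> C" for i
    using correct_entry[OF that] that by (simp add: C_def not_less)
  then have "3 * length (filter (\<lambda>x. x < Min (v ` C) \<or> Max (v ` C) < x) (non_bot A))
               < length (non_bot A)"
    unfolding A_def using two_thirds by (intro length_filter_non_bot_less_third[of C]) (auto simp: C_def)
  then have "Min (v ` C) \<le> select_value pick \<alpha> A \<and> select_value pick \<alpha> A \<le> Max (v ` C)"
    by (rule select_value_between)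
  with same_array show ?thesis
    by (auto simp: C_def)
qed

end
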